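(* Let $K\subset\mathbb{N}$ have upper natural density $\rho>0$ and let $\alpha\in(0,1)$ be irrational. Then $A_K(\alpha)$ has Lebesgue measure at least $\rho$. Furthermore, for every Bernoulli system $(\Omega,S,\mu)$ and every ball $B\subset\Omega$ with $\mu(B)>0$, for $\mu$-almost every $\omega\in\Omega$ the set $A_{K\cap K(\omega,B)}(\alpha)$ has Lebesgue measure at least $\rho$.
   Context: For $K\subset\mathbb{N}$ and $\alpha$, $A_K(\alpha)=\overline{\{\{k\alpha\}:k\in K\}}\subset[0,1]$, where $\{x\}$ is the fractional part. Upper natural density of $K$ is $\limsup_n\#(K\cap[1,n])/n$. A Bernoulli system: $\Lambda$ a finite set, $\Omega=\Lambda^{\mathbb{N}}$, $S$ the left shift $S(\omega_1\omega_2\dots)=\omega_2\omega_3\dots$, $\mu=\mu_\Lambda^{\mathbb{N}}$ a product measure where $\mu_\Lambda=(p_\lambda)_{\lambda\in\Lambda}$ is a probability vector with all $p_\lambda>0$; $\Omega$ carries the metric $d(\omega,\omega')=(\#\Lambda)^{-\min\{i:\omega_i\ne\omega'_i\}}$, and balls refer to this metric. For $B\subset\Omega$, $K(\omega,B)=\{k\in\mathbb{N}:S^k\omega\in B\}$. *)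

theory Defs
  imports "HOL-Probability.Probability"
begin

definition A_set :: "nat set \<Rightarrow> real \<Rightarrow> real set" where
  "A_set K \<alpha> = closure ((\<lambda>k. frac (real k * \<alpha>)) ` K)"

definition upper_density :: "nat set \<Rightarrow> ereal" where
  "upper_density K = limsup (\<lambda>n. ereal (real (card (K \<inter> {1..n})) / real n))"

text \<open>Bernoulli system over a finite alphabet 'a (the set Lambda is UNIV :: 'a set).
  Sequences are indexed from 0; position i corresponds to omega_(i+1) in the paper.\<close>
definition shift :: "(nat \<Rightarrow> 'a) \<Rightarrow> (nat \<Rightarrow> 'a)" where
  "shift \<omega> = (\<lambda>i. \<omega> (Suc i))"

definition bernoulli_measure :: "'a pmf \<Rightarrow> (nat \<Rightarrow> 'a) measure" where
  "bernoulli_measure p = PiM UNIV (\<lambda>_. measure_pmf p)"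

text \<open>d(omega,omega') = (#Lambda)^(-min{i : omega_i \<noteq> omega'_i}), paper indices start at 1.\<close>
definition seq_dist :: "(nat \<Rightarrow> 'a::finite) \<Rightarrow> (nat \<Rightarrow> 'a) \<Rightarrow> real" where
  "seq_dist \<omega> \<omega>' = (if \<omega> = \<omega>' then 0
      else real CARD('a) powr (- (real (LEAST i. \<omega> i \<noteq> \<omega>' i) + 1)))"

definition seq_ball :: "(nat \<Rightarrow> 'a::finite) \<Rightarrow> real \<Rightarrow> (nat \<Rightarrow> 'a) set" where
  "seq_ball \<omega> r = {\<omega>'. seq_dist \<omega> \<omega>' < r}"

definition seq_cball :: "(nat \<Rightarrow> 'a::finite) \<Rightarrow> real \<Rightarrow> (nat \<Rightarrow> 'a) set" where
  "seq_cball \<omega> r = {\<omega>'. seq_dist \<omega> \<omega>' \<le> r}"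

definition return_times :: "(nat \<Rightarrow> 'a) \<Rightarrow> (nat \<Rightarrow> 'a) set \<Rightarrow> nat set" where
  "return_times \<omega> B = {k. k \<ge> 1 \<and> (shift ^^ k) \<omega> \<in> B}"

end

theory Submission
  imports Defs "HOL-Analysis.Kronecker_Approximation_Theorem"
begin

(* By Dirichlet's theorem there are q > 0 and p with s = q*alpha - p nonzero and arbitrarily
   small.  Along a residue class mod q the points frac(k*alpha) advance by s, so T ~ 1/|s|
   consecutive ones are |s|-separated mod 1; hence among qT consecutive integers at most
   q * lambda(A + [0,|s|]) / |s| have frac(k*alpha) in A.  A set of upper density rho whose
   elements, up to finitely many, land in a compact A therefore forces lambda(A) >= rho.

   For the random part, a ball of positive measure contains a cylinder [w_0 ... w_(N-1)].
   If A_(K \<inter> K(omega,B)) had measure < rho it would lie in one of countably many finite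
   unions U of rational balls with lambda(U) < rho, and by the first part infinitely many
   k in K have frac(k*alpha) outside U.  Almost surely the cylinder word occurs at one of
   these k (blocks at positions N apart are independent), which gives a contradiction. *)

section \<open>Points of an irrational rotation in a compact set\<close>

lemma abs_frac_diff_ge:
  fixes a b s :: real and d :: int
  assumes "a - b = of_int d * s" and "d \<noteq> 0" and "\<bar>of_int d\<bar> * \<bar>s\<bar> \<le> 1 - \<bar>s\<bar>"
  shows "\<bar>s\<bar> \<le> \<bar>frac a - frac b\<bar>"
proof -
  define m where "m = \<lfloor>a\<rfloor> - \<lfloor>b\<rfloor>"
  have diff: "frac a - frac b = of_int d * s - of_int m"
    using assms(1) by (simp add: frac_def m_def)
  have "1 \<le> \<bar>of_int d :: real\<bar>"
    using assms(2) by linarith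
  then have ds: "\<bar>s\<bar> \<le> \<bar>of_int d * s\<bar>" and ds': "\<bar>of_int d * s\<bar> \<le> 1 - \<bar>s\<bar>"
    using assms(3) by (simp_all add: abs_mult mult_le_cancel_right1)
  show ?thesis
  proof (cases "m = 0")
    case True
    then show ?thesis using diff ds by simp
  next
    case False
    then have "1 \<le> \<bar>of_int m :: real\<bar>" by linarith
    moreover have "\<bar>of_int m\<bar> - \<bar>of_int d * s\<bar> \<le> \<bar>frac a - frac b\<bar>"
      unfolding diff using abs_triangle_ineq2[of "of_int m" "of_int d * s"]
      by (simp add: abs_minus_commute)
    ultimately show ?thesis using ds' by linarith
  qed
qed

definition thickening :: "'a::real_normed_vector set \<Rightarrow> real \<Rightarrow> 'a set" where
  "thickening A d = {a + y | a y. a \<in> A \<and> y \<in> cball 0 d}"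

lemma compact_thickening: "compact (A :: 'a::euclidean_space set) \<Longrightarrow> compact (thickening A d)"
  unfolding thickening_def by (intro compact_sums) auto

lemma thickening_mono: "d \<le> e \<Longrightarrow> thickening A d \<subseteq> thickening A e"
  unfolding thickening_def by force

lemma add_mem_thickening: "a \<in> A \<Longrightarrow> norm y \<le> d \<Longrightarrow> a + y \<in> thickening A d"
  unfolding thickening_def by force

lemma Inter_thickening:
  assumes "closed A"
  shows "(\<Inter>n. thickening A (1 / (real n + 1))) = A"
proof
  show "A \<subseteq> (\<Inter>n. thickening A (1 / (real n + 1)))"
  proof (intro subsetI INT_I)
    fix a n assume "a \<in> A"
    show "a \<in> thickening A (1 / (real n + 1))"
      using add_mem_thickening[OF \<open>a \<in> A\<close>, of 0] by simp
  qed
next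
  show "(\<Inter>n. thickening A (1 / (real n + 1))) \<subseteq> A"
  proof
    fix x assume x: "x \<in> (\<Inter>n. thickening A (1 / (real n + 1)))"
    have "\<exists>a\<in>A. dist a x < e" if "e > 0" for e
    proof -
      obtain n where n: "1 / (real n + 1) < e"
        using nat_approx_posE[OF \<open>e > 0\<close>] by (metis of_nat_Suc add.commute)
      have "x \<in> thickening A (1 / (real n + 1))"
        using x by simp
      then obtain a y where "x = a + y" "a \<in> A" "norm y \<le> 1 / (real n + 1)"
        unfolding thickening_def by auto
      with n show ?thesis
        by (intro bexI[of _ a]) (simp_all add: dist_norm)
    qed
    then have "x \<in> closure A"
      unfolding closure_approachable by blast
    then show "x \<in> A"
      using closure_closed[OF assms] by simp
  qed
qed

lemma measure_thickening_tendsto: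
  fixes A :: "'a::euclidean_space set"
  assumes "compact A"
  shows "(\<lambda>n. measure lborel (thickening A (1 / (real n + 1)))) \<longlonglongrightarrow> measure lborel A"
proof -
  have "(\<lambda>n. measure lborel (thickening A (1 / (real n + 1))))
          \<longlonglongrightarrow> measure lborel (\<Inter>n. thickening A (1 / (real n + 1)))"
  proof (rule Lim_measure_decseq)
    show "range (\<lambda>n. thickening A (1 / (real n + 1))) \<subseteq> sets lborel"
      using assms by (auto intro!: borel_compact compact_thickening)
    show "decseq (\<lambda>n. thickening A (1 / (real n + 1)))"
      by (rule decseq_SucI, rule thickening_mono) (simp add: frac_le)
    show "emeasure lborel (thickening A (1 / (real n + 1))) \<noteq> \<infinity>" for n
      using fmeasurable_compact[OF compact_thickening[OF assms]]
      by (simp add: fmeasurable_def less_top)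
  qed
  then show ?thesis
    using Inter_thickening[OF compact_imp_closed[OF assms]] by simp
qed

lemma disjoint_family_frac_progression:
  fixes s x :: real and T :: nat
  assumes "real T * \<bar>s\<bar> \<le> 1"
  shows "disjoint_family_on (\<lambda>t. {frac (x + real t * s)..<frac (x + real t * s) + \<bar>s\<bar>}) {..<T}"
  unfolding disjoint_family_on_def
proof (intro ballI impI)
  fix t t' assume "t \<in> {..<T}" "t' \<in> {..<T}" "t \<noteq> t'"
  have "\<bar>s\<bar> \<le> \<bar>frac (x + real t * s) - frac (x + real t' * s)\<bar>"
  proof (rule abs_frac_diff_ge)
    show "x + real t * s - (x + real t' * s) = of_int (int t - int t') * s"
      by (simp add: algebra_simps)
    show "int t - int t' \<noteq> 0"
      using \<open>t \<noteq> t'\<close> by simp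
    have "\<bar>of_int (int t - int t')\<bar> \<le> real T - 1"
      using \<open>t \<in> {..<T}\<close> \<open>t' \<in> {..<T}\<close> by auto
    then have "\<bar>of_int (int t - int t')\<bar> * \<bar>s\<bar> \<le> (real T - 1) * \<bar>s\<bar>"
      by (rule mult_right_mono) simp
    then show "\<bar>of_int (int t - int t')\<bar> * \<bar>s\<bar> \<le> 1 - \<bar>s\<bar>"
      using assms by (simp add: algebra_simps)
  qed
  then show "{frac (x + real t * s)..<frac (x + real t * s) + \<bar>s\<bar>}
      \<inter> {frac (x + real t' * s)..<frac (x + real t' * s) + \<bar>s\<bar>} = {}"
    by auto
qed

lemma card_frac_progression_le_measure:
  fixes A :: "real set" and s d x :: real and T :: nat
  assumes "compact A" and "\<bar>s\<bar> \<le> d" and "real T * \<bar>s\<bar> \<le> 1"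
  shows "real (card {t. t < T \<and> frac (x + real t * s) \<in> A}) * \<bar>s\<bar>
           \<le> measure lborel (thickening A d)"
proof -
  define S where "S = {t. t < T \<and> frac (x + real t * s) \<in> A}"
  define I where "I t = {frac (x + real t * s)..<frac (x + real t * s) + \<bar>s\<bar>}" for t
  have "finite S"
    by (simp add: S_def)
  moreover have "disjoint_family_on I S"
    unfolding I_def using disjoint_family_frac_progression[OF assms(3), of x]
    by (rule disjoint_family_on_mono[rotated]) (auto simp: S_def)
  ultimately have "real (card S) * \<bar>s\<bar> = measure lborel (\<Union>t\<in>S. I t)"
    by (subst measure_finite_Union) (auto simp: I_def)
  also have "\<dots> \<le> measure lborel (thickening A d)"
  proof (rule measure_mono_fmeasurable)
    show "(\<Union>t\<in>S. I t) \<subseteq> thickening A d"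
    proof
      fix y assume "y \<in> (\<Union>t\<in>S. I t)"
      then obtain t where "t \<in> S" "y \<in> I t" by blast
      then have "frac (x + real t * s) + (y - frac (x + real t * s)) \<in> thickening A d"
        using assms(2) by (intro add_mem_thickening) (auto simp: S_def I_def)
      then show "y \<in> thickening A d" by simp
    qed
    show "(\<Union>t\<in>S. I t) \<in> sets lborel"
      using \<open>finite S\<close> by (intro sets.finite_UN) (simp_all add: I_def)
    show "thickening A d \<in> fmeasurable lborel"
      using assms(1) by (intro fmeasurable_compact compact_thickening)
  qed
  finally show ?thesis
    by (simp add: S_def)
qed

text \<open>Write k = m + r + q t with r < q and t < T: since q alpha - s is an integer,
  frac (k alpha) = frac ((m + r) alpha + t s).\<close>

lemma card_frac_window_le_sum:
  fixes A :: "real set" and \<alpha> s :: real and q T m :: nat and p :: int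
  assumes "s = real q * \<alpha> - of_int p"
  shows "card {k. m \<le> k \<and> k < m + q * T \<and> frac (real k * \<alpha>) \<in> A}
           \<le> (\<Sum>r<q. card {t. t < T \<and> frac (real (m + r) * \<alpha> + real t * s) \<in> A})"
proof -
  define W where "W = {k. m \<le> k \<and> k < m + q * T \<and> frac (real k * \<alpha>) \<in> A}"
  define S where "S r = {t. t < T \<and> frac (real (m + r) * \<alpha> + real t * s) \<in> A}" for r
  have "W \<subseteq> (\<Union>r<q. (\<lambda>t. m + r + q * t) ` S r)"
  proof
    fix k assume "k \<in> W"
    then have "q > 0" and "m \<le> k" and "k - m < q * T"
      by (auto simp: W_def intro: gr0I)
    define r where "r = (k - m) mod q"
    define t where "t = (k - m) div q"
    have k: "k = m + r + q * t"
      using \<open>m \<le> k\<close> by (simp add: r_def t_def)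
    have "t < T"
      using \<open>k - m < q * T\<close> \<open>q > 0\<close> by (simp add: t_def div_less_iff_less_mult mult.commute)
    have "real k * \<alpha> = real (m + r) * \<alpha> + real t * s + of_int (int t * p)"
      by (simp add: k assms algebra_simps)
    then have "frac (real k * \<alpha>) = frac (real (m + r) * \<alpha> + real t * s)"
      by (simp only: frac_add_of_int_right)
    then have "t \<in> S r"
      using \<open>k \<in> W\<close> \<open>t < T\<close> by (simp add: S_def W_def)
    moreover have "r < q"
      using \<open>q > 0\<close> by (simp add: r_def)
    ultimately show "k \<in> (\<Union>r<q. (\<lambda>t. m + r + q * t) ` S r)"
      using k by blast
  qed
  then have "card W \<le> card (\<Union>r<q. (\<lambda>t. m + r + q * t) ` S r)"
    by (intro card_mono) (auto simp: S_def)
  also have "\<dots> \<le> (\<Sum>r<q. card ((\<lambda>t. m + r + q * t) ` S r))"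
    by (rule card_UN_le) simp
  also have "\<dots> \<le> (\<Sum>r<q. card (S r))"
    by (intro sum_mono card_image_le) (simp add: S_def)
  finally show ?thesis
    by (simp add: W_def S_def)
qed

lemma card_frac_window_le_measure:
  fixes A :: "real set" and \<alpha> s d :: real and q T m :: nat and p :: int
  assumes "compact A" and "s = real q * \<alpha> - of_int p" and "\<bar>s\<bar> \<le> d"
    and "real T * \<bar>s\<bar> \<le> 1"
  shows "real (card {k. m \<le> k \<and> k < m + q * T \<and> frac (real k * \<alpha>) \<in> A}) * \<bar>s\<bar>
           \<le> real q * measure lborel (thickening A d)"
proof -
  define S where "S r = {t. t < T \<and> frac (real (m + r) * \<alpha> + real t * s) \<in> A}" for r
  have "real (card {k. m \<le> k \<and> k < m + q * T \<and> frac (real k * \<alpha>) \<in> A})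
      \<le> real (\<Sum>r<q. card (S r))"
    unfolding S_def using card_frac_window_le_sum[OF assms(2), of m T A] by (rule of_nat_mono)
  then have "real (card {k. m \<le> k \<and> k < m + q * T \<and> frac (real k * \<alpha>) \<in> A}) * \<bar>s\<bar>
      \<le> real (\<Sum>r<q. card (S r)) * \<bar>s\<bar>"
    by (rule mult_right_mono) simp
  also have "\<dots> = (\<Sum>r<q. real (card (S r)) * \<bar>s\<bar>)"
    by (simp add: sum_distrib_right)
  also have "\<dots> \<le> (\<Sum>r<q. measure lborel (thickening A d))"
    unfolding S_def by (intro sum_mono card_frac_progression_le_measure assms(1,3,4))
  finally show ?thesis
    by simp
qed

lemma card_le_windows:
  fixes P :: "nat \<Rightarrow> bool" and M n :: nat and C :: real
  assumes "M > 0" and "\<And>m. real (card {k. m \<le> k \<and> k < m + M \<and> P k}) \<le> C"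
  shows "real (card {k. 1 \<le> k \<and> k \<le> n \<and> P k}) \<le> (real (n div M) + 1) * C"
proof -
  define W where "W c = {k. 1 + c * M \<le> k \<and> k < 1 + c * M + M \<and> P k}" for c
  have "{k. 1 \<le> k \<and> k \<le> n \<and> P k} \<subseteq> (\<Union>c\<le>n div M. W c)"
  proof
    fix k assume k: "k \<in> {k. 1 \<le> k \<and> k \<le> n \<and> P k}"
    define c where "c = (k - 1) div M"
    have "c * M + (k - 1) mod M = k - 1"
      by (simp add: c_def)
    moreover have "(k - 1) mod M < M"
      using assms(1) by simp
    ultimately have "c * M \<le> k - 1" and "k - 1 < c * M + M"
      by linarith+
    moreover have "c \<le> n div M"
      unfolding c_def using k by (intro div_le_mono) auto
    ultimately show "k \<in> (\<Union>c\<le>n div M. W c)"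
      using k by (intro UN_I[of c]) (auto simp: W_def)
  qed
  then have "card {k. 1 \<le> k \<and> k \<le> n \<and> P k} \<le> card (\<Union>c\<le>n div M. W c)"
    by (intro card_mono) (auto simp: W_def)
  also have "\<dots> \<le> (\<Sum>c\<le>n div M. card (W c))"
    by (rule card_UN_le) simp
  finally have "real (card {k. 1 \<le> k \<and> k \<le> n \<and> P k}) \<le> (\<Sum>c\<le>n div M. real (card (W c)))"
    by (simp flip: of_nat_sum)
  also have "\<dots> \<le> (\<Sum>c\<le>n div M. C)"
    unfolding W_def by (intro sum_mono assms(2))
  finally show ?thesis
    by (simp add: algebra_simps)
qed

lemma upper_density_nonneg: "0 \<le> upper_density K"
  unfolding upper_density_def by (intro le_Limsup) auto

lemma upper_density_le_window_bound:
  fixes K F :: "nat set" and P :: "nat \<Rightarrow> bool" and M :: nat and C :: real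
  assumes "M > 0" and "finite F" and "K \<subseteq> {k. P k} \<union> F"
    and "\<And>m. real (card {k. m \<le> k \<and> k < m + M \<and> P k}) \<le> C"
  shows "upper_density K \<le> ereal (C / real M)"
proof -
  have "0 \<le> C"
    using assms(4)[of 0] of_nat_0_le_iff order_trans by blast
  have bound: "real (card (K \<inter> {1..n})) / real n \<le> C / real M + (real (card F) + C) / real n"
    for n
  proof (cases "n = 0")
    case True
    then show ?thesis
      using \<open>0 \<le> C\<close> by simp
  next
    case False
    have "K \<inter> {1..n} \<subseteq> {k. 1 \<le> k \<and> k \<le> n \<and> P k} \<union> F"
      using assms(3) by auto
    then have "card (K \<inter> {1..n}) \<le> card ({k. 1 \<le> k \<and> k \<le> n \<and> P k} \<union> F)"
      using assms(2) by (intro card_mono) auto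
    also have "\<dots> \<le> card {k. 1 \<le> k \<and> k \<le> n \<and> P k} + card F"
      by (rule card_Un_le)
    finally have "real (card (K \<inter> {1..n})) \<le> (real (n div M) + 1) * C + real (card F)"
      using card_le_windows[of M P C n, OF assms(1,4)] by linarith
    also have "\<dots> \<le> (real n / real M + 1) * C + real (card F)"
      using \<open>0 \<le> C\<close> by (intro add_right_mono mult_right_mono) (simp_all add: of_nat_div_le_of_nat)
    finally show ?thesis
      using False by (simp add: field_simps)
  qed
  have "upper_density K \<le> limsup (\<lambda>n. ereal (C / real M + (real (card F) + C) / real n))"
    unfolding upper_density_def
    by (intro Limsup_mono always_eventually allI, subst ereal_less_eq, rule bound)
  also have "\<dots> = ereal (C / real M)"
    by (intro lim_imp_Limsup) (auto intro!: tendsto_eq_intros lim_const_over_n)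
  finally show ?thesis .
qed

lemma upper_density_le_thickening:
  fixes K F :: "nat set" and A :: "real set" and \<rho> \<alpha> s d :: real and q :: nat and p :: int
  assumes "upper_density K = ereal \<rho>" and "K \<subseteq> {k. frac (real k * \<alpha>) \<in> A} \<union> F"
    and "finite F" and "compact A" and "s = real q * \<alpha> - of_int p" and "q > 0"
    and "0 < \<bar>s\<bar>" and "\<bar>s\<bar> < 1" and "\<bar>s\<bar> \<le> d"
  shows "\<rho> * (1 - \<bar>s\<bar>) \<le> measure lborel (thickening A d)"
proof -
  define T where "T = nat \<lfloor>1 / \<bar>s\<bar>\<rfloor>"
  define L where "L = measure lborel (thickening A d)"
  have "real T * \<bar>s\<bar> \<le> 1" and "1 - \<bar>s\<bar> \<le> real T * \<bar>s\<bar>"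
  proof -
    have "1 / \<bar>s\<bar> - 1 \<le> real T" and "real T \<le> 1 / \<bar>s\<bar>"
      using assms(7) by (simp_all add: T_def)
    then show "real T * \<bar>s\<bar> \<le> 1" and "1 - \<bar>s\<bar> \<le> real T * \<bar>s\<bar>"
      using assms(7) by (simp_all add: field_simps)
  qed
  then have "T > 0"
    using assms(8) by (intro gr0I) simp
  have "real (card {k. m \<le> k \<and> k < m + q * T \<and> frac (real k * \<alpha>) \<in> A}) \<le> real q * L / \<bar>s\<bar>" for m
    using card_frac_window_le_measure[OF assms(4,5,9) \<open>real T * \<bar>s\<bar> \<le> 1\<close>, of m] assms(7)
    by (simp add: L_def field_simps)
  then have "upper_density K \<le> ereal (real q * L / \<bar>s\<bar> / real (q * T))"
    using assms(2,3,6) \<open>T > 0\<close> by (intro upper_density_le_window_bound) auto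
  then have "\<rho> \<le> L / (real T * \<bar>s\<bar>)"
    using assms(1,6) by (simp add: field_simps)
  then have "\<rho> * (real T * \<bar>s\<bar>) \<le> L"
    using \<open>T > 0\<close> assms(7) by (simp add: field_simps)
  moreover have "\<rho> * (1 - \<bar>s\<bar>) \<le> \<rho> * (real T * \<bar>s\<bar>)"
    using upper_density_nonneg[of K] assms(1) \<open>1 - \<bar>s\<bar> \<le> real T * \<bar>s\<bar>\<close>
    by (intro mult_left_mono) auto
  ultimately show ?thesis
    by (simp add: L_def)
qed

lemma irrational_multiple_near_int:
  fixes \<alpha> \<eta> :: real
  assumes "\<alpha> \<notin> \<rat>" and "\<eta> > 0"
  obtains q :: nat and p :: int
  where "q > 0" and "0 < \<bar>real q * \<alpha> - of_int p\<bar>" and "\<bar>real q * \<alpha> - of_int p\<bar> < \<eta>"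
proof -
  obtain N :: nat where N: "inverse (real (Suc N)) < \<eta>"
    using reals_Archimedean[OF assms(2)] by blast
  obtain p k where "0 < k" and pk: "\<bar>of_int k * \<alpha> - of_int p\<bar> < 1 / real (Suc N)"
    by (rule Dirichlet_approx[of "Suc N" \<alpha>]) auto
  define q where "q = nat k"
  have q: "real q = of_int k" and "q > 0"
    using \<open>0 < k\<close> by (simp_all add: q_def)
  have "real q * \<alpha> - of_int p \<noteq> 0"
  proof
    assume "real q * \<alpha> - of_int p = 0"
    then have "\<alpha> = of_int p / of_int k"
      using \<open>0 < k\<close> q by (simp add: field_simps)
    with assms(1) show False
      by simp
  qed
  moreover have "\<bar>real q * \<alpha> - of_int p\<bar> < \<eta>"
    using pk N unfolding q inverse_eq_divide by linarith
  ultimately show ?thesis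
    by (intro that[OF \<open>q > 0\<close>]) auto
qed

lemma upper_density_le_measure:
  fixes K F :: "nat set" and A :: "real set" and \<rho> \<alpha> :: real
  assumes "upper_density K = ereal \<rho>" and "\<alpha> \<notin> \<rat>" and "compact A"
    and "K \<subseteq> {k. frac (real k * \<alpha>) \<in> A} \<union> F" and "finite F"
  shows "\<rho> \<le> measure lborel A"
proof -
  have "0 \<le> \<rho>"
    using upper_density_nonneg[of K] assms(1) by simp
  have "\<rho> \<le> measure lborel (thickening A d)" if "d > 0" for d
  proof (rule field_le_epsilon)
    fix e :: real assume "e > 0"
    define \<eta> where "\<eta> = min (min d (1 / 2)) (e / (\<rho> + 1))"
    have "\<eta> > 0"
      using \<open>d > 0\<close> \<open>e > 0\<close> \<open>0 \<le> \<rho>\<close> by (simp add: \<eta>_def)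
    then obtain q p where "q > 0" and s: "0 < \<bar>real q * \<alpha> - of_int p\<bar>" "\<bar>real q * \<alpha> - of_int p\<bar> < \<eta>"
      by (rule irrational_multiple_near_int[OF assms(2)])
    define s where "s = real q * \<alpha> - of_int p"
    have "0 < \<bar>s\<bar>" "\<bar>s\<bar> < 1" "\<bar>s\<bar> \<le> d" "\<bar>s\<bar> \<le> e / (\<rho> + 1)"
      using s by (simp_all add: s_def \<eta>_def)
    then have "\<rho> * (1 - \<bar>s\<bar>) \<le> measure lborel (thickening A d)"
      by (intro upper_density_le_thickening[OF assms(1,4,5,3) s_def \<open>q > 0\<close>])
    moreover have "\<rho> * \<bar>s\<bar> \<le> e"
    proof -
      have "\<rho> * \<bar>s\<bar> \<le> (\<rho> + 1) * (e / (\<rho> + 1))"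
        using \<open>\<bar>s\<bar> \<le> e / (\<rho> + 1)\<close> \<open>0 \<le> \<rho>\<close> by (intro mult_mono) auto
      then show ?thesis
        using \<open>0 \<le> \<rho>\<close> by simp
    qed
    ultimately show "\<rho> \<le> measure lborel (thickening A d) + e"
      by (simp add: algebra_simps)
  qed
  then show ?thesis
    by (intro tendsto_lowerbound[OF measure_thickening_tendsto[OF assms(3)]] always_eventually allI)
      simp_all
qed

lemma compact_A_set: "compact (A_set K \<alpha>)"
proof -
  have "(\<lambda>k. frac (real k * \<alpha>)) ` K \<subseteq> cbox 0 1"
    by (auto simp: less_imp_le[OF frac_lt_1])
  then have "bounded (A_set K \<alpha>)"
    unfolding A_set_def by (meson bounded_cbox bounded_closure bounded_subset)
  then show ?thesis
    by (simp add: A_set_def compact_eq_bounded_closed)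
qed

lemma frac_mem_A_set: "k \<in> K \<Longrightarrow> frac (real k * \<alpha>) \<in> A_set K \<alpha>"
  unfolding A_set_def using closure_subset[of "(\<lambda>k. frac (real k * \<alpha>)) ` K"] by auto

lemma measure_A_set_ge:
  assumes "upper_density K = ereal \<rho>" and "\<alpha> \<notin> \<rat>"
  shows "\<rho> \<le> measure lborel (A_set K \<alpha>)"
  using frac_mem_A_set[of _ K \<alpha>]
  by (intro upper_density_le_measure[OF assms compact_A_set, where F = "{}"]) auto

section \<open>Cylinders in the Bernoulli shift\<close>

lemma space_bernoulli_measure [simp]: "space (bernoulli_measure p) = UNIV"
  by (simp add: bernoulli_measure_def space_PiM)

lemma prob_space_bernoulli_measure: "prob_space (bernoulli_measure p)"
  unfolding bernoulli_measure_def by (rule prob_space_PiM) (simp add: prob_space_measure_pmf)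

lemma funpow_shift: "(shift ^^ k) \<omega> = (\<lambda>i. \<omega> (k + i))"
  by (induction k arbitrary: \<omega>) (auto simp: shift_def)

lemma all_less_shift_iff:
  fixes k N :: nat
  shows "(\<forall>i<N. x (k + i) = c i) \<longleftrightarrow> (\<forall>i\<in>{k..<k + N}. x i = c (i - k))"
proof
  assume H: "\<forall>i<N. x (k + i) = c i"
  show "\<forall>i\<in>{k..<k + N}. x i = c (i - k)"
  proof
    fix i assume "i \<in> {k..<k + N}"
    then have "i - k < N" and "k + (i - k) = i"
      by auto
    then show "x i = c (i - k)"
      using H by metis
  qed
qed auto

lemma sets_bernoulli_block: "{\<omega>. \<forall>i<N. \<omega> (k + i) = c i} \<in> sets (bernoulli_measure p)"
proof -
  have "{\<omega>. \<forall>i<N. \<omega> (k + i) = c i}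
      = {\<omega> \<in> space (bernoulli_measure p). \<forall>i\<in>{k..<k + N}. \<omega> i \<in> {c (i - k)}}"
    by (simp add: all_less_shift_iff)
  also have "\<dots> \<in> sets (bernoulli_measure p)"
    unfolding bernoulli_measure_def by (rule sets.sets_Collect_finite_All) auto
  finally show ?thesis .
qed

lemma measure_bernoulli_block:
  "measure (bernoulli_measure p) {\<omega>. \<forall>i<N. \<omega> (k + i) = c i} = (\<Prod>i<N. pmf p (c i))"
proof -
  interpret product_prob_space "\<lambda>_::nat. measure_pmf p" UNIV
    by unfold_locales
  have "{\<omega>. \<forall>i<N. \<omega> (k + i) = c i}
      = {\<omega> \<in> space (bernoulli_measure p). \<forall>i\<in>{k..<k + N}. \<omega> i \<in> {c (i - k)}}"
    by (simp add: all_less_shift_iff)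
  also have "emeasure (bernoulli_measure p) \<dots> = (\<Prod>i\<in>{k..<k + N}. emeasure (measure_pmf p) {c (i - k)})"
    unfolding bernoulli_measure_def by (rule emeasure_PiM_Collect) auto
  also have "\<dots> = ennreal (\<Prod>i<N. pmf p (c i))"
    using prod.shift_bounds_nat_ivl[of "\<lambda>i. ennreal (pmf p (c (i - k)))" 0 k N]
    by (simp add: emeasure_pmf_single prod_ennreal add.commute lessThan_atLeast0)
  finally show ?thesis
    by (simp add: measure_def prod_nonneg)
qed

lemma indep_vars_coordinates:
  "prob_space.indep_vars (bernoulli_measure p) (\<lambda>_. measure_pmf p) (\<lambda>i \<omega>. \<omega> i) (UNIV :: nat set)"
proof -
  interpret P: product_prob_space "\<lambda>_::nat. measure_pmf p" UNIV
    by unfold_locales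
  interpret B: prob_space "bernoulli_measure p"
    by (rule prob_space_bernoulli_measure)
  have "(\<lambda>\<omega>. \<omega> i) \<in> measurable (bernoulli_measure p) (measure_pmf p)" for i
    unfolding bernoulli_measure_def by (rule measurable_component_singleton) simp
  moreover have "distr (bernoulli_measure p) (measure_pmf p) (\<lambda>\<omega>. \<omega> i) = measure_pmf p" for i
    unfolding bernoulli_measure_def by (rule P.PiM_component) simp
  ultimately show ?thesis
    by (subst B.indep_vars_iff_distr_eq_PiM)
       (simp_all add: bernoulli_measure_def restrict_UNIV distr_id2)
qed

lemma (in prob_space) AE_ex_of_indep_events:
  fixes E :: "nat \<Rightarrow> 'a set"
  assumes "indep_events E UNIV" and "\<And>j. P \<le> prob (E j)" and "0 < P"
  shows "AE x in M. \<exists>j. x \<in> E j"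
proof -
  have E: "E j \<in> events" for j
    using assms(1) unfolding indep_events_def by blast
  have "indep_sets (\<lambda>j. sigma_sets (space M) {E j}) UNIV"
    using assms(1) by (intro indep_sets_sigma) (simp_all add: indep_events_def_alt Int_stable_def)
  then have "prob (\<Inter>j<Suc n. space M - E j) = (\<Prod>j<Suc n. prob (space M - E j))" for n
    by (rule indep_setsD) (auto intro: sigma_sets.Compl sigma_sets.Basic)
  then have prod: "prob (\<Inter>j<Suc n. space M - E j) = (\<Prod>j<Suc n. 1 - prob (E j))" for n
    by (simp add: prob_compl[OF E])
  define Z where "Z = space M - (\<Union>j. E j)"
  have Z: "Z \<in> events"
    using E by (auto simp: Z_def)
  have bound: "prob Z \<le> (1 - P) ^ Suc n" for n
  proof -
    have "prob Z \<le> prob (\<Inter>j<Suc n. space M - E j)"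
      using E by (intro finite_measure_mono) (auto simp: Z_def)
    also have "\<dots> \<le> (\<Prod>j<Suc n. 1 - P)"
      unfolding prod using assms(2) prob_le_1 by (intro prod_mono) (auto simp: algebra_simps)
    finally show ?thesis
      by simp
  qed
  have "P \<le> 1"
    using assms(2)[of 0] prob_le_1[of "E 0"] by linarith
  then have lim: "(\<lambda>n. (1 - P) ^ Suc n) \<longlonglongrightarrow> 0"
    using assms(3) by (intro LIMSEQ_Suc LIMSEQ_power_zero) auto
  have "prob Z \<le> 0"
    by (rule tendsto_lowerbound[OF lim always_eventually[OF allI[OF bound]]]) simp
  then have "AE x in M. x \<notin> Z"
    using prob_eq_0[OF Z] measure_nonneg[of M Z] by linarith
  then show ?thesis
    by (rule AE_mp) (simp add: Z_def)
qed

lemma strict_mono_add_le: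
  fixes f :: "nat \<Rightarrow> nat"
  assumes "strict_mono f"
  shows "f m + n \<le> f (m + n)"
proof (induction n)
  case (Suc n)
  then show ?case
    using strict_monoD[OF assms, of "m + n" "m + Suc n"] by simp
qed simp

lemma infinite_nat_obtain_spaced:
  fixes J :: "nat set" and N :: nat
  assumes "infinite J"
  obtains g :: "nat \<Rightarrow> nat" where "\<And>j. g j \<in> J" and "\<And>j j'. j < j' \<Longrightarrow> g j + N \<le> g j'"
proof
  show "enumerate J (j * N) \<in> J" for j
    using assms by (rule enumerate_in_set)
  show "enumerate J (j * N) + N \<le> enumerate J (j' * N)" if "j < j'" for j j'
  proof -
    have "j * N + N \<le> j' * N"
      using mult_le_mono1[OF Suc_leI[OF that], of N] by simp
    then have "enumerate J (j * N + N) \<le> enumerate J (j' * N)"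
      using assms by simp
    then show ?thesis
      using strict_mono_add_le[OF strict_mono_enumerate[OF assms], of "j * N" N] by linarith
  qed
qed

lemma indep_events_bernoulli_blocks:
  fixes g :: "nat \<Rightarrow> nat" and c :: "nat \<Rightarrow> 'a" and N :: nat
  assumes spaced: "\<And>j j'. j < j' \<Longrightarrow> g j + N \<le> g j'"
  shows "prob_space.indep_events (bernoulli_measure p) (\<lambda>j. {\<omega>. \<forall>i<N. \<omega> (g j + i) = c i}) UNIV"
proof -
  interpret B: prob_space "bernoulli_measure p"
    by (rule prob_space_bernoulli_measure)
  define D where "D j = {g j..<g j + N}" for j
  have "disjoint_family D"
    unfolding disjoint_family_on_def
  proof (intro ballI impI)
    fix j j' :: nat assume "j \<noteq> j'"
    then show "D j \<inter> D j' = {}"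
      using spaced[of j j'] spaced[of j' j] by (cases "j < j'") (auto simp: D_def)
  qed
  then have "B.indep_vars (\<lambda>j. PiM (D j) (\<lambda>_. measure_pmf p)) (\<lambda>j \<omega>. restrict \<omega> (D j)) UNIV"
    by (intro B.indep_vars_restrict[OF indep_vars_coordinates]) auto
  then have "B.indep_events (\<lambda>j. {\<omega> \<in> space (bernoulli_measure p).
      (\<lambda>x. \<forall>i<N. x (g j + i) = c i) (restrict \<omega> (D j))}) UNIV"
  proof (rule B.indep_eventsI_indep_vars)
    fix j
    have "{x \<in> space (PiM (D j) (\<lambda>_. measure_pmf p)). \<forall>i<N. x (g j + i) = c i}
        = {x \<in> space (PiM (D j) (\<lambda>_. measure_pmf p)). \<forall>i\<in>D j. x i \<in> {c (i - g j)}}"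
      by (simp add: D_def all_less_shift_iff)
    also have "\<dots> \<in> sets (PiM (D j) (\<lambda>_. measure_pmf p))"
      by (rule sets.sets_Collect_finite_All) (auto simp: D_def)
    finally show "{x \<in> space (PiM (D j) (\<lambda>_. measure_pmf p)). \<forall>i<N. x (g j + i) = c i}
        \<in> sets (PiM (D j) (\<lambda>_. measure_pmf p))" .
  qed
  then show ?thesis
    by (simp add: D_def)
qed

lemma AE_bernoulli_block_in_infinite:
  fixes p :: "'a pmf" and J :: "nat set" and c :: "nat \<Rightarrow> 'a" and N :: nat
  assumes "set_pmf p = UNIV" and "infinite J"
  shows "AE \<omega> in bernoulli_measure p. \<exists>k\<in>J. \<forall>i<N. \<omega> (k + i) = c i"
proof -
  interpret B: prob_space "bernoulli_measure p"
    by (rule prob_space_bernoulli_measure)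
  obtain g :: "nat \<Rightarrow> nat" where "\<And>j. g j \<in> J" and spaced: "\<And>j j'. j < j' \<Longrightarrow> g j + N \<le> g j'"
    using infinite_nat_obtain_spaced[OF assms(2), where N = N] by blast
  have "0 < (\<Prod>i<N. pmf p (c i))"
    using assms(1) by (intro prod_pos) (auto simp: pmf_positive_iff)
  then have "AE \<omega> in bernoulli_measure p. \<exists>j. \<omega> \<in> {\<omega>. \<forall>i<N. \<omega> (g j + i) = c i}"
    using indep_events_bernoulli_blocks[OF spaced]
    by (intro B.AE_ex_of_indep_events[where P = "\<Prod>i<N. pmf p (c i)"])
       (simp_all add: measure_bernoulli_block)
  then show ?thesis
    by (rule AE_mp, intro AE_I2 impI) (use \<open>\<And>j. g j \<in> J\<close> in blast)
qed

lemma pmf_less_1_of_other_mem: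
  assumes "y \<noteq> x" and "y \<in> set_pmf p"
  shows "pmf p x < 1"
proof -
  have "pmf p x + pmf p y = measure_pmf.prob p {x, y}"
    using assms(1) by (simp add: measure_pmf_conv_infsetsum infsetsum_finite)
  also have "\<dots> \<le> 1"
    by simp
  finally show ?thesis
    using pmf_positive[OF assms(2)] by linarith
qed

lemma ex_neq_of_card_ge_2:
  assumes "CARD('a::finite) \<ge> 2"
  shows "\<exists>y :: 'a. y \<noteq> x"
proof (rule ccontr)
  assume "\<nexists>y :: 'a. y \<noteq> x"
  then have "(UNIV :: 'a set) = {x}"
    by auto
  then have "CARD('a) = Suc 0"
    by (metis card_1_singleton_iff)
  with assms show False
    by simp
qed

lemma emeasure_bernoulli_singleton:
  fixes p :: "'a::finite pmf"
  assumes "set_pmf p = UNIV" and "CARD('a) \<ge> 2"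
  shows "emeasure (bernoulli_measure p) {\<omega>0} = 0"
proof -
  interpret B: prob_space "bernoulli_measure p"
    by (rule prob_space_bernoulli_measure)
  define m where "m = Max (range (pmf p))"
  have "pmf p x < 1" for x
    using ex_neq_of_card_ge_2[OF assms(2), of x] assms(1)
    by (auto intro: pmf_less_1_of_other_mem)
  then have "m < 1"
    unfolding m_def by (simp add: Max_less_iff)
  have "pmf p undefined \<le> m"
    unfolding m_def by (rule Max_ge) auto
  then have "0 \<le> m"
    using pmf_nonneg[of p undefined] by linarith
  have bound: "measure (bernoulli_measure p) {\<omega>0} \<le> m ^ N" for N
  proof -
    have "measure (bernoulli_measure p) {\<omega>0}
        \<le> measure (bernoulli_measure p) {\<omega>. \<forall>i<N. \<omega> (0 + i) = \<omega>0 i}"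
      by (intro B.finite_measure_mono sets_bernoulli_block) auto
    also have "\<dots> = (\<Prod>i<N. pmf p (\<omega>0 i))"
      by (rule measure_bernoulli_block)
    also have "\<dots> \<le> (\<Prod>i<N. m)"
      unfolding m_def by (intro prod_mono) auto
    finally show ?thesis
      by simp
  qed
  have lim: "(\<lambda>N. m ^ N) \<longlonglongrightarrow> 0"
    using \<open>m < 1\<close> \<open>0 \<le> m\<close> by (intro LIMSEQ_power_zero) auto
  have "measure (bernoulli_measure p) {\<omega>0} \<le> 0"
    by (rule tendsto_lowerbound[OF lim always_eventually[OF allI[OF bound]]]) simp
  then show ?thesis
    by (simp add: B.emeasure_eq_measure measure_le_0_iff)
qed

lemma seq_dist_le_of_agree:
  fixes \<omega>0 \<omega> :: "nat \<Rightarrow> 'a::finite"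
  assumes "CARD('a) \<ge> 2" and "\<forall>i<N. \<omega> i = \<omega>0 i"
  shows "seq_dist \<omega>0 \<omega> \<le> 1 / (real N + 1)"
proof (cases "\<omega>0 = \<omega>")
  case False
  define L where "L = (LEAST i. \<omega>0 i \<noteq> \<omega> i)"
  have "\<exists>i. \<omega>0 i \<noteq> \<omega> i"
    using False by auto
  then have "\<omega>0 L \<noteq> \<omega> L"
    unfolding L_def by (rule LeastI_ex)
  have "N \<le> L"
    by (rule ccontr) (use assms(2) \<open>\<omega>0 L \<noteq> \<omega> L\<close> in auto)
  define c where "c = real CARD('a)"
  have "2 \<le> c"
    using assms(1) by (simp add: c_def)
  have "seq_dist \<omega>0 \<omega> = c powr (- (real L + 1))"
    using False by (simp add: seq_dist_def L_def c_def)
  also have "\<dots> = 1 / c ^ Suc L"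
  proof -
    have "real L + 1 = real (Suc L)" and "0 < c"
      using \<open>2 \<le> c\<close> by simp_all
    then show ?thesis
      by (simp only: powr_minus powr_realpow) (simp add: divide_inverse)
  qed
  also have "\<dots> \<le> 1 / (real N + 1)"
  proof (rule divide_left_mono)
    have "real (Suc L) < 2 ^ Suc L"
      by (rule of_nat_less_two_power)
    also have "(2::real) ^ Suc L \<le> c ^ Suc L"
      using \<open>2 \<le> c\<close> by (intro power_mono) auto
    finally show "real N + 1 \<le> c ^ Suc L"
      using \<open>N \<le> L\<close> by simp
  qed (use \<open>2 \<le> c\<close> in auto)
  finally show ?thesis .
qed (simp add: seq_dist_def)

lemma cylinder_subset_seq_ball:
  fixes \<omega>0 :: "nat \<Rightarrow> 'a::finite"
  assumes "CARD('a) \<ge> 2" and "r > 0"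
  obtains N where "{\<omega>. \<forall>i<N. \<omega> i = \<omega>0 i} \<subseteq> seq_ball \<omega>0 r"
proof -
  obtain N :: nat where N: "inverse (real (Suc N)) < r"
    using reals_Archimedean[OF assms(2)] by blast
  have "seq_dist \<omega>0 \<omega> < r" if "\<forall>i<N. \<omega> i = \<omega>0 i" for \<omega>
    using seq_dist_le_of_agree[OF assms(1) that] N by (simp add: inverse_eq_divide add.commute)
  then show ?thesis
    by (intro that[of N]) (auto simp: seq_ball_def)
qed

lemma seq_cball_nonpos_subset:
  fixes \<omega>0 :: "nat \<Rightarrow> 'a::finite"
  assumes "CARD('a) \<ge> 2" and "r \<le> 0"
  shows "seq_cball \<omega>0 r \<subseteq> {\<omega>0}"
proof
  fix \<omega> assume "\<omega> \<in> seq_cball \<omega>0 r"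
  moreover have "seq_dist \<omega>0 \<omega> > 0" if "\<omega> \<noteq> \<omega>0"
    using that assms(1) by (auto simp: seq_dist_def)
  ultimately show "\<omega> \<in> {\<omega>0}"
    using assms(2) by (force simp: seq_cball_def)
qed

text \<open>Positive measure is only needed when r \<le> 0: then the ball is at most the point omega0,
  a null set as soon as the alphabet has two letters.\<close>

lemma seq_ball_contains_cylinder:
  fixes p :: "'a::finite pmf" and \<omega>0 :: "nat \<Rightarrow> 'a"
  assumes "B = seq_ball \<omega>0 r \<or> B = seq_cball \<omega>0 r" and "emeasure (bernoulli_measure p) B > 0"
    and "set_pmf p = UNIV"
  obtains N where "{\<omega>. \<forall>i<N. \<omega> i = \<omega>0 i} \<subseteq> B"
proof (cases "CARD('a) \<ge> 2")
  case False
  then have "x = y" for x y :: 'a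
    using card_le_Suc0_iff_eq[of "UNIV :: 'a set"] by auto
  then have eq: "\<omega> = \<omega>'" for \<omega> \<omega>' :: "nat \<Rightarrow> 'a"
    by auto
  obtain \<omega> where "\<omega> \<in> B"
    using assms(2) by force
  then have "B = UNIV"
    using eq by (metis UNIV_eq_I)
  then show ?thesis
    by (intro that[of 0]) simp
next
  case True
  have "seq_ball \<omega>0 r \<subseteq> seq_cball \<omega>0 r"
    by (auto simp: seq_ball_def seq_cball_def)
  show ?thesis
  proof (cases "r > 0")
    case True
    then obtain N where "{\<omega>. \<forall>i<N. \<omega> i = \<omega>0 i} \<subseteq> seq_ball \<omega>0 r"
      using cylinder_subset_seq_ball[OF \<open>CARD('a) \<ge> 2\<close>] by blast
    with assms(1) \<open>seq_ball \<omega>0 r \<subseteq> seq_cball \<omega>0 r\<close> show ?thesis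
      using that by blast
  next
    case False
    then have "B \<subseteq> {\<omega>0}"
      using assms(1) \<open>seq_ball \<omega>0 r \<subseteq> seq_cball \<omega>0 r\<close>
        seq_cball_nonpos_subset[OF \<open>CARD('a) \<ge> 2\<close>, of r \<omega>0] by auto
    then have "emeasure (bernoulli_measure p) B = 0"
      using emeasure_bernoulli_singleton[OF assms(3) \<open>CARD('a) \<ge> 2\<close>]
      by (auto dest: subset_singletonD)
    with assms(2) show ?thesis
      by simp
  qed
qed

section \<open>Returns to a ball\<close>

definition rat_cball_unions :: "real set set" where
  "rat_cball_unions = {(\<Union>x\<in>P. cball (of_rat x) (1 / (real n + 1))) | P n. finite P}"

lemma countable_rat_cball_unions: "countable rat_cball_unions"
proof -
  have "rat_cball_unions
      = (\<lambda>(P, n). \<Union>x\<in>P. cball (of_rat x) (1 / (real n + 1))) ` (Collect finite \<times> UNIV)"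
    by (auto simp: rat_cball_unions_def)
  moreover have "countable (Collect finite \<times> (UNIV :: nat set) :: (rat set \<times> nat) set)"
    by (intro countable_SIGMA countable_Collect_finite) simp_all
  ultimately show ?thesis
    by (metis countable_image)
qed

lemma compact_of_mem_rat_cball_unions: "U \<in> rat_cball_unions \<Longrightarrow> compact U"
  unfolding rat_cball_unions_def by (auto intro: compact_UN)

lemma compact_rat_cball_cover:
  fixes A :: "real set" and e :: real
  assumes "compact A" and "e > 0"
  obtains P where "finite P" and "A \<subseteq> (\<Union>x\<in>P. cball (of_rat x) e)"
    and "(\<Union>x\<in>P. cball (of_rat x) e) \<subseteq> thickening A (2 * e)"
proof -
  define C where "C = {x :: rat. \<exists>a\<in>A. dist (of_rat x) a < e}"
  have "A \<subseteq> (\<Union>x\<in>C. ball (of_rat x) e)"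
  proof
    fix a assume "a \<in> A"
    obtain r where "r \<in> \<rat>" and "a - e < r" and "r < a"
      using Rats_dense_in_real[of "a - e" a] assms(2) by auto
    moreover from \<open>r \<in> \<rat>\<close> obtain x where "r = of_rat x"
      by (auto elim: Rats_cases)
    ultimately have "dist (of_rat x) a < e"
      by (simp add: dist_real_def)
    with \<open>a \<in> A\<close> show "a \<in> (\<Union>x\<in>C. ball (of_rat x) e)"
      unfolding C_def by auto
  qed
  then obtain P where "P \<subseteq> C" and "finite P" and cover: "A \<subseteq> (\<Union>x\<in>P. ball (of_rat x) e)"
    by (rule compactE_image[OF assms(1), rotated]) auto
  have "(\<Union>x\<in>P. ball (of_rat x :: real) e) \<subseteq> (\<Union>x\<in>P. cball (of_rat x) e)"
    by (intro UN_mono ball_subset_cball) auto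
  with cover have "A \<subseteq> (\<Union>x\<in>P. cball (of_rat x) e)"
    by (rule order_trans)
  moreover have "(\<Union>x\<in>P. cball (of_rat x) e) \<subseteq> thickening A (2 * e)"
  proof
    fix y :: real assume "y \<in> (\<Union>x\<in>P. cball (of_rat x) e)"
    then obtain x where "x \<in> P" and x: "dist (of_rat x) y \<le> e"
      by auto
    then obtain a where "a \<in> A" and a: "dist (of_rat x) a < e"
      using \<open>P \<subseteq> C\<close> unfolding C_def by blast
    have "dist a y \<le> dist (of_rat x) a + dist (of_rat x) y"
      by (rule dist_triangle3)
    then have "norm (y - a) \<le> 2 * e"
      using x a by (simp add: dist_norm norm_minus_commute)
    then have "a + (y - a) \<in> thickening A (2 * e)"
      by (rule add_mem_thickening[OF \<open>a \<in> A\<close>])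
    then show "y \<in> thickening A (2 * e)"
      by simp
  qed
  ultimately show ?thesis
    using \<open>finite P\<close> that by blast
qed

lemma exists_rat_cball_union_superset:
  fixes A :: "real set"
  assumes "compact A" and "measure lborel A < \<rho>"
  obtains U where "U \<in> rat_cball_unions" and "A \<subseteq> U" and "measure lborel U < \<rho>"
proof -
  have "eventually (\<lambda>n. measure lborel (thickening A (1 / (real n + 1))) < \<rho>) sequentially"
    using measure_thickening_tendsto[OF assms(1)] assms(2) by (rule order_tendstoD(2))
  then obtain n where n: "measure lborel (thickening A (1 / (real n + 1))) < \<rho>"
    by (meson eventually_sequentially order.refl)
  define e where "e = 1 / (real (2 * n + 1) + 1)"
  have "e > 0" and e2: "2 * e = 1 / (real n + 1)"
    by (simp_all add: e_def field_simps)
  then obtain P where "finite P" and "A \<subseteq> (\<Union>x\<in>P. cball (of_rat x) e)"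
    and sub: "(\<Union>x\<in>P. cball (of_rat x) e) \<subseteq> thickening A (1 / (real n + 1))"
    using compact_rat_cball_cover[OF assms(1) \<open>e > 0\<close>] by metis
  define U :: "real set" where "U = (\<Union>x\<in>P. cball (of_rat x) e)"
  have "U \<in> rat_cball_unions"
    unfolding rat_cball_unions_def U_def e_def using \<open>finite P\<close>
    by (intro CollectI exI[of _ P] exI[of _ "2 * n + 1"]) simp
  moreover have "measure lborel U \<le> measure lborel (thickening A (1 / (real n + 1)))"
    using sub compact_of_mem_rat_cball_unions[OF \<open>U \<in> rat_cball_unions\<close>]
      fmeasurable_compact[OF compact_thickening[OF assms(1)]]
    by (intro measure_mono_fmeasurable) (simp_all add: U_def borel_compact)
  ultimately show ?thesis
    using n that \<open>A \<subseteq> (\<Union>x\<in>P. cball (of_rat x) e)\<close> by (auto simp: U_def)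
qed

lemma AE_block_at_frac_outside:
  fixes K :: "nat set" and U :: "real set" and p :: "'a pmf" and c :: "nat \<Rightarrow> 'a"
  assumes "upper_density K = ereal \<rho>" and "\<alpha> \<notin> \<rat>" and "set_pmf p = UNIV"
    and "compact U" and "measure lborel U < \<rho>"
  shows "AE \<omega> in bernoulli_measure p.
    \<exists>k\<in>{k \<in> K. 1 \<le> k \<and> frac (real k * \<alpha>) \<notin> U}. \<forall>i<N. \<omega> (k + i) = c i"
proof -
  have "infinite {k \<in> K. 1 \<le> k \<and> frac (real k * \<alpha>) \<notin> U}"
  proof
    assume "finite {k \<in> K. 1 \<le> k \<and> frac (real k * \<alpha>) \<notin> U}"
    then have "\<rho> \<le> measure lborel U"
      by (intro upper_density_le_measure[OF assms(1,2,4),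
            where F = "{k \<in> K. 1 \<le> k \<and> frac (real k * \<alpha>) \<notin> U} \<union> {0}"]) auto
    with assms(5) show False
      by simp
  qed
  then show ?thesis
    by (rule AE_bernoulli_block_in_infinite[OF assms(3)])
qed

lemma AE_measure_A_set_return_times_ge:
  fixes K :: "nat set" and \<rho> \<alpha> :: real and p :: "'a::finite pmf" and B :: "(nat \<Rightarrow> 'a) set"
  assumes "upper_density K = ereal \<rho>" and "\<alpha> \<notin> \<rat>" and "set_pmf p = UNIV"
    and "B = seq_ball \<omega>0 r \<or> B = seq_cball \<omega>0 r" and "emeasure (bernoulli_measure p) B > 0"
  shows "AE \<omega> in bernoulli_measure p. \<rho> \<le> measure lborel (A_set (K \<inter> return_times \<omega> B) \<alpha>)"
proof -
  obtain N where cylinder: "{\<omega>. \<forall>i<N. \<omega> i = \<omega>0 i} \<subseteq> B"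
    using seq_ball_contains_cylinder[OF assms(4,5,3)] by blast
  define J where "J U = {k \<in> K. 1 \<le> k \<and> frac (real k * \<alpha>) \<notin> U}" for U
  have "AE \<omega> in bernoulli_measure p. \<forall>U\<in>rat_cball_unions.
      measure lborel U < \<rho> \<longrightarrow> (\<exists>k\<in>J U. \<forall>i<N. \<omega> (k + i) = \<omega>0 i)"
  proof (subst AE_ball_countable[OF countable_rat_cball_unions], intro ballI)
    fix U assume "U \<in> rat_cball_unions"
    show "AE \<omega> in bernoulli_measure p.
        measure lborel U < \<rho> \<longrightarrow> (\<exists>k\<in>J U. \<forall>i<N. \<omega> (k + i) = \<omega>0 i)"
    proof (cases "measure lborel U < \<rho>")
      case True
      have "AE \<omega> in bernoulli_measure p. \<exists>k\<in>J U. \<forall>i<N. \<omega> (k + i) = \<omega>0 i"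
        unfolding J_def using compact_of_mem_rat_cball_unions[OF \<open>U \<in> rat_cball_unions\<close>] True
        by (rule AE_block_at_frac_outside[OF assms(1-3)])
      then show ?thesis
        by (rule AE_mp, intro AE_I2 impI) blast
    qed simp
  qed
  then show ?thesis
  proof (rule AE_mp, intro AE_I2 impI)
    fix \<omega>
    assume hits: "\<forall>U\<in>rat_cball_unions. measure lborel U < \<rho> \<longrightarrow> (\<exists>k\<in>J U. \<forall>i<N. \<omega> (k + i) = \<omega>0 i)"
    show "\<rho> \<le> measure lborel (A_set (K \<inter> return_times \<omega> B) \<alpha>)"
    proof (rule ccontr)
      assume "\<not> ?thesis"
      then obtain U where "U \<in> rat_cball_unions" and cover: "A_set (K \<inter> return_times \<omega> B) \<alpha> \<subseteq> U"
        and "measure lborel U < \<rho>"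
        using exists_rat_cball_union_superset[OF compact_A_set] not_le by blast
      then obtain k where "k \<in> J U" and "\<forall>i<N. \<omega> (k + i) = \<omega>0 i"
        using hits by blast
      then have "k \<in> K \<inter> return_times \<omega> B"
        using cylinder by (auto simp: J_def return_times_def funpow_shift)
      then have "frac (real k * \<alpha>) \<in> U"
        using frac_mem_A_set cover by blast
      with \<open>k \<in> J U\<close> show False
        by (simp add: J_def)
    qed
  qed
qed

theorem lemma9p1:
  fixes K :: "nat set" and \<rho> \<alpha> :: real
  assumes "upper_density K = ereal \<rho>" and "\<rho> > 0"
    and "0 < \<alpha>" and "\<alpha> < 1" and "\<alpha> \<notin> \<rat>"
  shows "measure lborel (A_set K \<alpha>) \<ge> \<rho> \<and>
    (\<forall>(p :: 'a::finite pmf) B \<omega>0 r.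
        set_pmf p = UNIV \<longrightarrow>
        (B = seq_ball \<omega>0 r \<or> B = seq_cball \<omega>0 r) \<longrightarrow>
        emeasure (bernoulli_measure p) B > 0 \<longrightarrow>
        (AE \<omega> in bernoulli_measure p.
            measure lborel (A_set (K \<inter> return_times \<omega> B) \<alpha>) \<ge> \<rho>))"
  using measure_A_set_ge[OF assms(1,5)] AE_measure_A_set_return_times_ge[OF assms(1,5)] by blast

end
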